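(* Let $K$ be a kite (built from a triangle with angles $\alpha,\beta$ adjacent to a side of length $1$) in standard position, and let $K_1=K,K_2,\dots,K_n$ be a kite unfolding sequence given by a combinatorics of length $n$ (i.e. $n-1$ rotations). Let $(x^{\alpha}_n,y^{\alpha}_n)$ and $(x^{\beta}_n,y^{\beta}_n)$ be the coordinates of the $\alpha$-vertex and $\beta$-vertex of $K_n$, and $(x_n,y_n)$ the coordinates of either of the two side vertices of $K_n$. Then: (1) $x^{\alpha}_n,y^{\alpha}_n,x^{\beta}_n,y^{\beta}_n$ are trigonometric polynomials in $\alpha,\beta$ with integer coefficients, depending only on the combinatorics, of degree at most $2n-2$; (2) $x_n=P(\alpha,\beta)+\frac{\sin\beta}{\sin(\alpha+\beta)}\cos(m\alpha+l\beta)$ and $y_n=Q(\alpha,\beta)+\frac{\sin\beta}{\sin(\alpha+\beta)}\sin(m\alpha+l\beta)$, where $P,Q$ are trigonometric polynomials with integer coefficients of degree at most $2n-2$ and $m,l$ are integers with $|m|+|l|\le 2n-1$.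
   Context: Let $T$ be a triangle with a side $AB$ of length $1$ whose adjacent angles are $\alpha$ (at $A$) and $\beta$ (at $B$). The kite $K$ is the union of $T$ and its reflection across $AB$; it has an $\alpha$-vertex $A$ (with angle $2\alpha$), a $\beta$-vertex $B$ (with angle $2\beta$), and two side vertices. The kite diagonal is the vector from the $\alpha$-vertex to the $\beta$-vertex, and the kite angle is the counterclockwise angle from the $x$-axis to the kite diagonal. $K$ is in standard position if its $\alpha$-vertex is at the origin and its $\beta$-vertex at $(1,0)$. A kite unfolding step replaces a kite by its image under rotation about its $\alpha$-vertex by $\pm2\alpha$ or about its $\beta$-vertex by $\pm2\beta$ (this corresponds to unfolding the triangle billiard along an orbit). A combinatorics of length $n$ is a sequence of $n-1$ such choices (angles $\pm2\alpha$ or $\pm2\beta$), producing kites $K_1=K,\dots,K_n$. A trigonometric polynomial in $\alpha,\beta$ with integer coefficients of degree at most $d$ is an integer linear combination of $\cos(a\alpha+b\beta)$ and $\sin(a\alpha+b\beta)$ with integers $|a|+|b|\le d$. *)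

theory Defs
  imports Complex_Main
begin

text \<open>Points of the plane are complex numbers; the coordinates of a point z are (Re z, Im z).\<close>

definition admissible :: "real \<Rightarrow> real \<Rightarrow> bool" where
  "admissible \<alpha> \<beta> \<longleftrightarrow> 0 < \<alpha> \<and> 0 < \<beta> \<and> \<alpha> + \<beta> < pi"

text \<open>Third vertex of the triangle T with A = 0, B = 1, angle alpha at A, angle beta at B,
  lying in the upper half plane.\<close>
definition tri_apex :: "real \<Rightarrow> real \<Rightarrow> complex" where
  "tri_apex \<alpha> \<beta> = (THE c. \<exists>t>0. \<exists>s>0. c = complex_of_real t * cis \<alpha> \<and>
                               c = 1 + complex_of_real s * cis (pi - \<beta>))"

type_synonym kite = "complex \<times> complex \<times> complex \<times> complex"

definition alpha_vertex :: "kite \<Rightarrow> complex" where "alpha_vertex K = fst K"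
definition beta_vertex :: "kite \<Rightarrow> complex" where "beta_vertex K = fst (snd K)"
definition side_vertex1 :: "kite \<Rightarrow> complex" where "side_vertex1 K = fst (snd (snd K))"
definition side_vertex2 :: "kite \<Rightarrow> complex" where "side_vertex2 K = snd (snd (snd K))"

text \<open>Kite in standard position: union of T and its reflection across AB (the real axis).\<close>
definition std_kite :: "real \<Rightarrow> real \<Rightarrow> kite" where
  "std_kite \<alpha> \<beta> = (0, 1, tri_apex \<alpha> \<beta>, cnj (tri_apex \<alpha> \<beta>))"

definition rot :: "complex \<Rightarrow> real \<Rightarrow> complex \<Rightarrow> complex" where
  "rot p \<theta> z = p + cis \<theta> * (z - p)"

definition rot_kite :: "complex \<Rightarrow> real \<Rightarrow> kite \<Rightarrow> kite" where
  "rot_kite p \<theta> K = (case K of (a, b, c, d) \<Rightarrow> (rot p \<theta> a, rot p \<theta> b, rot p \<theta> c, rot p \<theta> d))"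

datatype step = AlphaPlus | AlphaMinus | BetaPlus | BetaMinus

fun unfold_step :: "real \<Rightarrow> real \<Rightarrow> kite \<Rightarrow> step \<Rightarrow> kite" where
  "unfold_step \<alpha> \<beta> K AlphaPlus  = rot_kite (alpha_vertex K) (2 * \<alpha>) K"
| "unfold_step \<alpha> \<beta> K AlphaMinus = rot_kite (alpha_vertex K) (- 2 * \<alpha>) K"
| "unfold_step \<alpha> \<beta> K BetaPlus   = rot_kite (beta_vertex K) (2 * \<beta>) K"
| "unfold_step \<alpha> \<beta> K BetaMinus  = rot_kite (beta_vertex K) (- 2 * \<beta>) K"

text \<open>Last kite K_n of the unfolding sequence given by a combinatorics ws
  (a list of n-1 steps), starting from the kite in standard position.\<close>
definition last_kite :: "real \<Rightarrow> real \<Rightarrow> step list \<Rightarrow> kite" where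
  "last_kite \<alpha> \<beta> ws = foldl (unfold_step \<alpha> \<beta>) (std_kite \<alpha> \<beta>) ws"

definition trig_poly_on :: "nat \<Rightarrow> (real \<Rightarrow> real \<Rightarrow> real) \<Rightarrow> bool" where
  "trig_poly_on d f \<longleftrightarrow> (\<exists>c s :: int \<times> int \<Rightarrow> int. \<forall>\<alpha> \<beta>. admissible \<alpha> \<beta> \<longrightarrow>
     f \<alpha> \<beta> = (\<Sum>(a, b) \<in> {(a, b). \<bar>a\<bar> + \<bar>b\<bar> \<le> int d}.
        of_int (c (a, b)) * cos (of_int a * \<alpha> + of_int b * \<beta>)
      + of_int (s (a, b)) * sin (of_int a * \<alpha> + of_int b * \<beta>)))"

end

theory Submission
  imports Defs
begin

text \<open>In complex coordinates the kite in standard position has vertices 0, 1 and, by the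
  law of sines, \<open>r cis (\<plusminus>\<alpha>)\<close> with \<open>r = sin \<beta> / sin (\<alpha> + \<beta>)\<close>. An unfolding step is
  \<open>z \<mapsto> p + cis \<theta> (z - p)\<close> with pivot \<open>p\<close> the \<alpha>- or \<beta>-vertex and \<open>\<theta> = \<plusminus>2\<alpha>\<close> or \<open>\<plusminus>2\<beta>\<close>.
  Hence, by induction on the combinatorics, every vertex is a finite sum of Gaussian-integer
  multiples of \<open>cis (a\<alpha> + b\<beta>)\<close>, plus for the side vertices one extra term \<open>r cis (m\<alpha> + l\<beta>)\<close>:
  the pivots carry no such term, so each step only multiplies it by \<open>cis \<theta>\<close>, and every step
  raises all degrees by at most 2. Taking real and imaginary parts gives the claim.\<close>

lemma trig_poly_on_zero: "trig_poly_on d (\<lambda>_ _. 0)"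
  unfolding trig_poly_on_def by (rule exI[of _ "\<lambda>_. 0"])+ (simp add: split_def)

lemma trig_poly_on_add:
  assumes "trig_poly_on d f" "trig_poly_on d g"
  shows "trig_poly_on d (\<lambda>\<alpha> \<beta>. f \<alpha> \<beta> + g \<alpha> \<beta>)"
proof -
  let ?S = "\<lambda>c s \<alpha> \<beta>. \<Sum>(a, b) \<in> {(a, b). \<bar>a\<bar> + \<bar>b\<bar> \<le> int d}.
        of_int (c (a, b)) * cos (of_int a * \<alpha> + of_int b * \<beta>)
      + of_int (s (a, b)) * sin (of_int a * \<alpha> + of_int b * \<beta>)"
  obtain c s c' s' where "\<forall>\<alpha> \<beta>. admissible \<alpha> \<beta> \<longrightarrow> f \<alpha> \<beta> = ?S c s \<alpha> \<beta>"
    and "\<forall>\<alpha> \<beta>. admissible \<alpha> \<beta> \<longrightarrow> g \<alpha> \<beta> = ?S c' s' \<alpha> \<beta>"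
    using assms unfolding trig_poly_on_def by blast
  then show ?thesis
    unfolding trig_poly_on_def
    by (intro exI[of _ "\<lambda>k. c k + c' k"] exI[of _ "\<lambda>k. s k + s' k"])
       (simp add: split_def sum.distrib[symmetric] algebra_simps)
qed

lemma finite_degree_box: "finite {(a, b :: int). \<bar>a\<bar> + \<bar>b\<bar> \<le> int d}"
  by (rule finite_subset[of _ "{- int d..int d} \<times> {- int d..int d}"]) auto

lemma trig_poly_on_monomial:
  fixes a b x y :: int
  assumes "\<bar>a\<bar> + \<bar>b\<bar> \<le> int d"
  shows "trig_poly_on d (\<lambda>\<alpha> \<beta>. of_int x * cos (of_int a * \<alpha> + of_int b * \<beta>)
                                 + of_int y * sin (of_int a * \<alpha> + of_int b * \<beta>))"
proof -
  let ?c = "\<lambda>k. if k = (a, b) then x else 0" and ?s = "\<lambda>k. if k = (a, b) then y else 0"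
  have "(\<Sum>(a', b') \<in> {(a, b). \<bar>a\<bar> + \<bar>b\<bar> \<le> int d}.
          of_int (?c (a', b')) * cos (of_int a' * \<alpha> + of_int b' * \<beta>)
        + of_int (?s (a', b')) * sin (of_int a' * \<alpha> + of_int b' * \<beta>))
      = (\<Sum>k \<in> {(a, b). \<bar>a\<bar> + \<bar>b\<bar> \<le> int d}. if k = (a, b) then
          of_int x * cos (of_int a * \<alpha> + of_int b * \<beta>) + of_int y * sin (of_int a * \<alpha> + of_int b * \<beta>)
          else 0)" for \<alpha> \<beta> :: real
    by (rule sum.cong) (auto split: prod.splits)
  also have "\<dots> \<alpha> \<beta> = of_int x * cos (of_int a * \<alpha> + of_int b * \<beta>) + of_int y * sin (of_int a * \<alpha> + of_int b * \<beta>)"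
    for \<alpha> \<beta> :: real
    using assms finite_degree_box by (simp add: sum.delta')
  finally show ?thesis
    unfolding trig_poly_on_def by (intro exI[of _ ?c] exI[of _ ?s]) simp
qed

lemma trig_poly_on_cong:
  assumes "trig_poly_on d f" "\<And>\<alpha> \<beta>. admissible \<alpha> \<beta> \<Longrightarrow> g \<alpha> \<beta> = f \<alpha> \<beta>"
  shows "trig_poly_on d g"
  using assms unfolding trig_poly_on_def by simp

inductive gauss_trig_poly :: "nat \<Rightarrow> (real \<Rightarrow> real \<Rightarrow> complex) \<Rightarrow> bool" for d where
  zero: "gauss_trig_poly d (\<lambda>_ _. 0)"
| monomial: "\<bar>a :: int\<bar> + \<bar>b\<bar> \<le> int d \<Longrightarrow>
    gauss_trig_poly d (\<lambda>\<alpha> \<beta>. Complex (of_int x) (of_int y) * cis (of_int a * \<alpha> + of_int b * \<beta>))"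
| add: "gauss_trig_poly d f \<Longrightarrow> gauss_trig_poly d g \<Longrightarrow> gauss_trig_poly d (\<lambda>\<alpha> \<beta>. f \<alpha> \<beta> + g \<alpha> \<beta>)"

lemma gauss_trig_poly_mono:
  assumes "gauss_trig_poly d f" "d \<le> d'"
  shows "gauss_trig_poly d' f"
  using assms by induction (auto intro: gauss_trig_poly.intros)

lemma gauss_trig_poly_uminus:
  assumes "gauss_trig_poly d f"
  shows "gauss_trig_poly d (\<lambda>\<alpha> \<beta>. - f \<alpha> \<beta>)"
  using assms
proof induction
  case (monomial a b x y)
  then show ?case
    using gauss_trig_poly.monomial[where x="-x" and y="-y"] by (simp flip: complex_minus)
next
  case (add f g)
  then show ?case using gauss_trig_poly.add[OF add.IH] by simp
qed (simp add: gauss_trig_poly.zero)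

lemma gauss_trig_poly_diff:
  assumes "gauss_trig_poly d f" "gauss_trig_poly d g"
  shows "gauss_trig_poly d (\<lambda>\<alpha> \<beta>. f \<alpha> \<beta> - g \<alpha> \<beta>)"
  using gauss_trig_poly.add[OF assms(1) gauss_trig_poly_uminus[OF assms(2)]] by simp

lemma gauss_trig_poly_mult_cis:
  assumes "gauss_trig_poly d f" "\<bar>p\<bar> + \<bar>q\<bar> \<le> int k"
  shows "gauss_trig_poly (d + k) (\<lambda>\<alpha> \<beta>. cis (of_int p * \<alpha> + of_int q * \<beta>) * f \<alpha> \<beta>)"
  using assms(1)
proof induction
  case zero
  then show ?case by (simp add: gauss_trig_poly.zero)
next
  case (monomial a b x y)
  have "\<bar>a + p\<bar> + \<bar>b + q\<bar> \<le> int (d + k)" using monomial assms(2) by linarith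
  then show ?case
    using gauss_trig_poly.monomial[where a="a + p" and b="b + q" and d="d + k"]
    by (simp add: cis_mult algebra_simps)
next
  case (add f g)
  then show ?case using gauss_trig_poly.add by (simp add: distrib_left)
qed

lemma trig_poly_on_Re_Im:
  assumes "gauss_trig_poly d f"
  shows "trig_poly_on d (\<lambda>\<alpha> \<beta>. Re (f \<alpha> \<beta>)) \<and> trig_poly_on d (\<lambda>\<alpha> \<beta>. Im (f \<alpha> \<beta>))"
  using assms
proof induction
  case zero
  then show ?case using trig_poly_on_zero by simp
next
  case (monomial a b x y)
  then show ?case
    using trig_poly_on_monomial[of a b d x "-y"] trig_poly_on_monomial[of a b d y x]
    by (simp add: cis.ctr algebra_simps)
next
  case (add f g)
  then show ?case using trig_poly_on_add by simp
qed

text \<open>\<open>e\<close> is the coefficient of the one term outside the polynomial part; for the \<alpha>- and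
  \<beta>-vertices \<open>e = 0\<close> and the frequencies \<open>m, l\<close> are irrelevant.\<close>

definition trig_rep :: "nat \<Rightarrow> (real \<Rightarrow> real \<Rightarrow> complex) \<Rightarrow> (real \<Rightarrow> real \<Rightarrow> complex) \<Rightarrow> bool" where
  "trig_rep d e v \<longleftrightarrow> (\<exists>f m l. gauss_trig_poly d f \<and> \<bar>m\<bar> + \<bar>l\<bar> \<le> int d + 1 \<and>
     (\<forall>\<alpha> \<beta>. admissible \<alpha> \<beta> \<longrightarrow> v \<alpha> \<beta> = f \<alpha> \<beta> + e \<alpha> \<beta> * cis (of_int m * \<alpha> + of_int l * \<beta>)))"

lemma trig_rep_rot:
  assumes "trig_rep d (\<lambda>_ _. 0) p" "trig_rep d e z" "\<bar>a\<bar> + \<bar>b\<bar> \<le> 2"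
  shows "trig_rep (d + 2) e (\<lambda>\<alpha> \<beta>. rot (p \<alpha> \<beta>) (of_int a * \<alpha> + of_int b * \<beta>) (z \<alpha> \<beta>))"
proof -
  obtain P where P: "gauss_trig_poly d P" "\<And>\<alpha> \<beta>. admissible \<alpha> \<beta> \<Longrightarrow> p \<alpha> \<beta> = P \<alpha> \<beta>"
    using assms(1) unfolding trig_rep_def by auto
  obtain f m l where f: "gauss_trig_poly d f" "\<bar>m\<bar> + \<bar>l\<bar> \<le> int d + 1"
    "\<And>\<alpha> \<beta>. admissible \<alpha> \<beta> \<Longrightarrow> z \<alpha> \<beta> = f \<alpha> \<beta> + e \<alpha> \<beta> * cis (of_int m * \<alpha> + of_int l * \<beta>)"
    using assms(2) unfolding trig_rep_def by blast
  let ?cis = "\<lambda>a b \<alpha> \<beta>. cis (of_int a * \<alpha> + of_int b * \<beta>)"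
  let ?g = "\<lambda>\<alpha> \<beta>. P \<alpha> \<beta> + ?cis a b \<alpha> \<beta> * (f \<alpha> \<beta> - P \<alpha> \<beta>)"
  have ab: "\<bar>a\<bar> + \<bar>b\<bar> \<le> int 2" using assms(3) by simp
  have "gauss_trig_poly (d + 2) ?g"
    using gauss_trig_poly.add[OF gauss_trig_poly_mono[OF P(1)]
        gauss_trig_poly_mult_cis[OF gauss_trig_poly_diff[OF f(1) P(1)] ab]]
    by simp
  moreover have "\<bar>m + a\<bar> + \<bar>l + b\<bar> \<le> int (d + 2) + 1"
    using f(2) assms(3) by linarith
  moreover have "rot (p \<alpha> \<beta>) (of_int a * \<alpha> + of_int b * \<beta>) (z \<alpha> \<beta>)
      = ?g \<alpha> \<beta> + e \<alpha> \<beta> * ?cis (m + a) (l + b) \<alpha> \<beta>" if "admissible \<alpha> \<beta>" for \<alpha> \<beta>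
  proof -
    have "?cis (m + a) (l + b) \<alpha> \<beta> = ?cis a b \<alpha> \<beta> * ?cis m l \<alpha> \<beta>"
      by (simp add: cis_mult algebra_simps)
    then show ?thesis
      using P(2)[OF that] f(3)[OF that] by (simp add: rot_def algebra_simps)
  qed
  ultimately show ?thesis
    unfolding trig_rep_def by blast
qed

lemma trig_rep_zero_Re_Im:
  assumes "trig_rep d (\<lambda>_ _. 0) v"
  shows "trig_poly_on d (\<lambda>\<alpha> \<beta>. Re (v \<alpha> \<beta>)) \<and> trig_poly_on d (\<lambda>\<alpha> \<beta>. Im (v \<alpha> \<beta>))"
proof -
  obtain f where f: "gauss_trig_poly d f" "\<And>\<alpha> \<beta>. admissible \<alpha> \<beta> \<Longrightarrow> v \<alpha> \<beta> = f \<alpha> \<beta>"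
    using assms unfolding trig_rep_def by auto
  then show ?thesis
    using trig_poly_on_Re_Im[OF f(1)] trig_poly_on_cong by (metis (no_types, lifting))
qed

lemma trig_rep_Re_Im:
  assumes "trig_rep d (\<lambda>\<alpha> \<beta>. complex_of_real (r \<alpha> \<beta>)) v"
  shows "\<exists>P Q. \<exists>m l :: int. trig_poly_on d P \<and> trig_poly_on d Q \<and> \<bar>m\<bar> + \<bar>l\<bar> \<le> int d + 1 \<and>
           (\<forall>\<alpha> \<beta>. admissible \<alpha> \<beta> \<longrightarrow>
              Re (v \<alpha> \<beta>) = P \<alpha> \<beta> + r \<alpha> \<beta> * cos (of_int m * \<alpha> + of_int l * \<beta>) \<and>
              Im (v \<alpha> \<beta>) = Q \<alpha> \<beta> + r \<alpha> \<beta> * sin (of_int m * \<alpha> + of_int l * \<beta>))"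
proof -
  obtain f m l where f: "gauss_trig_poly d f" "\<bar>m\<bar> + \<bar>l\<bar> \<le> int d + 1"
    "\<forall>\<alpha> \<beta>. admissible \<alpha> \<beta> \<longrightarrow> v \<alpha> \<beta> = f \<alpha> \<beta> + complex_of_real (r \<alpha> \<beta>) * cis (of_int m * \<alpha> + of_int l * \<beta>)"
    using assms unfolding trig_rep_def by blast
  then show ?thesis
    using trig_poly_on_Re_Im[OF f(1)]
    by (intro exI[of _ "\<lambda>\<alpha> \<beta>. Re (f \<alpha> \<beta>)"] exI[of _ "\<lambda>\<alpha> \<beta>. Im (f \<alpha> \<beta>)"] exI[of _ m] exI[of _ l]) simp
qed

lemma tri_apex_eq:
  assumes "admissible \<alpha> \<beta>"
  shows "tri_apex \<alpha> \<beta> = complex_of_real (sin \<beta> / sin (\<alpha> + \<beta>)) * cis \<alpha>"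
proof -
  from assms have "0 < \<alpha>" "0 < \<beta>" "\<alpha> + \<beta> < pi" by (auto simp: admissible_def)
  then have sin_pos: "sin \<alpha> > 0" "sin \<beta> > 0" "sin (\<alpha> + \<beta>) > 0"
    by (auto intro: sin_gt_zero)
  define t0 where "t0 = sin \<beta> / sin (\<alpha> + \<beta>)"
  define s0 where "s0 = sin \<alpha> / sin (\<alpha> + \<beta>)"
  have apex: "complex_of_real t0 * cis \<alpha> = 1 + complex_of_real s0 * cis (pi - \<beta>)"
    using sin_pos unfolding t0_def s0_def
    by (simp add: complex_eq_iff field_simps sin_add mult.commute)
  show ?thesis unfolding tri_apex_def t0_def[symmetric]
  proof (rule the_equality)
    show "\<exists>t>0. \<exists>s>0. complex_of_real t0 * cis \<alpha> = complex_of_real t * cis \<alpha> \<and>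
                     complex_of_real t0 * cis \<alpha> = 1 + complex_of_real s * cis (pi - \<beta>)"
    proof -
      have "t0 > 0" "s0 > 0" using sin_pos by (simp_all add: t0_def s0_def)
      then show ?thesis using apex by blast
    qed
  next
    fix c assume "\<exists>t>0. \<exists>s>0. c = complex_of_real t * cis \<alpha> \<and> c = 1 + complex_of_real s * cis (pi - \<beta>)"
    then obtain t s where ts: "c = complex_of_real t * cis \<alpha>" "c = 1 + complex_of_real s * cis (pi - \<beta>)"
      by blast
    have "complex_of_real (t - t0) * cis \<alpha> = complex_of_real (s - s0) * cis (pi - \<beta>)"
      using ts apex by (simp add: algebra_simps)
    \<comment> \<open>multiplying by \<open>cis \<beta>\<close> makes the right-hand side real\<close>
    then have "complex_of_real (t - t0) * cis (\<alpha> + \<beta>) = complex_of_real (s - s0) * cis pi"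
      by (metis (no_types, lifting) cis_mult diff_add_cancel mult.assoc)
    then have "(t - t0) * sin (\<alpha> + \<beta>) = 0"
      by (simp add: complex_eq_iff)
    then show "c = complex_of_real t0 * cis \<alpha>"
      using ts(1) sin_pos by simp
  qed
qed

lemma vertex_rot_kite:
  assumes "v \<in> {alpha_vertex, beta_vertex, side_vertex1, side_vertex2}"
  shows "v (rot_kite p \<theta> K) = rot p \<theta> (v K)"
  using assms by (cases K) (auto simp: rot_kite_def alpha_vertex_def beta_vertex_def
      side_vertex1_def side_vertex2_def)

lemma unfold_step_rotation:
  obtains pivot and a b :: int
  where "pivot \<in> {alpha_vertex, beta_vertex}" "\<bar>a\<bar> + \<bar>b\<bar> \<le> 2"
    "\<And>\<alpha> \<beta> K. unfold_step \<alpha> \<beta> K w = rot_kite (pivot K) (of_int a * \<alpha> + of_int b * \<beta>) K"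
proof (cases w)
  case AlphaPlus
  then show ?thesis using that[of alpha_vertex 2 0] by simp
next
  case AlphaMinus
  then show ?thesis using that[of alpha_vertex "-2" 0] by simp
next
  case BetaPlus
  then show ?thesis using that[of beta_vertex 0 2] by simp
next
  case BetaMinus
  then show ?thesis using that[of beta_vertex 0 "-2"] by simp
qed

definition kite_rep :: "nat \<Rightarrow> step list \<Rightarrow> bool" where
  "kite_rep d ws \<longleftrightarrow>
     (\<forall>v \<in> {alpha_vertex, beta_vertex}. trig_rep d (\<lambda>_ _. 0) (\<lambda>\<alpha> \<beta>. v (last_kite \<alpha> \<beta> ws))) \<and>
     (\<forall>v \<in> {side_vertex1, side_vertex2}.
        trig_rep d (\<lambda>\<alpha> \<beta>. complex_of_real (sin \<beta> / sin (\<alpha> + \<beta>))) (\<lambda>\<alpha> \<beta>. v (last_kite \<alpha> \<beta> ws)))"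

lemma kite_rep_Nil: "kite_rep 0 []"
proof -
  have "gauss_trig_poly 0 (\<lambda>\<alpha> \<beta>. 1)"
    using gauss_trig_poly.monomial[where a=0 and b=0 and x=1 and y=0 and d=0]
    by (simp flip: one_complex.ctr)
  then have "trig_rep 0 (\<lambda>_ _. 0) (\<lambda>\<alpha> \<beta>. beta_vertex (last_kite \<alpha> \<beta> []))"
    unfolding trig_rep_def
    by (intro exI[of _ "\<lambda>_ _. 1"] exI[of _ 0] exI[of _ 0])
       (simp add: last_kite_def std_kite_def beta_vertex_def)
  moreover have "trig_rep 0 (\<lambda>_ _. 0) (\<lambda>\<alpha> \<beta>. alpha_vertex (last_kite \<alpha> \<beta> []))"
    unfolding trig_rep_def using gauss_trig_poly.zero
    by (intro exI[of _ "\<lambda>_ _. 0"] exI[of _ 0] exI[of _ 0])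
       (simp add: last_kite_def std_kite_def alpha_vertex_def)
  moreover have "trig_rep 0 (\<lambda>\<alpha> \<beta>. complex_of_real (sin \<beta> / sin (\<alpha> + \<beta>)))
      (\<lambda>\<alpha> \<beta>. side_vertex1 (last_kite \<alpha> \<beta> []))"
    unfolding trig_rep_def using gauss_trig_poly.zero
    by (intro exI[of _ "\<lambda>_ _. 0"] exI[of _ 1] exI[of _ 0])
       (simp add: last_kite_def std_kite_def side_vertex1_def tri_apex_eq)
  moreover have "trig_rep 0 (\<lambda>\<alpha> \<beta>. complex_of_real (sin \<beta> / sin (\<alpha> + \<beta>)))
      (\<lambda>\<alpha> \<beta>. side_vertex2 (last_kite \<alpha> \<beta> []))"
    unfolding trig_rep_def using gauss_trig_poly.zero
    by (intro exI[of _ "\<lambda>_ _. 0"] exI[of _ "-1"] exI[of _ 0])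
       (simp add: last_kite_def std_kite_def side_vertex2_def tri_apex_eq cis_cnj)
  ultimately show ?thesis
    unfolding kite_rep_def by blast
qed

lemma kite_rep_snoc:
  assumes "kite_rep d ws"
  shows "kite_rep (d + 2) (ws @ [w])"
proof -
  obtain pivot and a b :: int where pivot: "pivot \<in> {alpha_vertex, beta_vertex}" "\<bar>a\<bar> + \<bar>b\<bar> \<le> 2"
    "\<And>\<alpha> \<beta> K. unfold_step \<alpha> \<beta> K w = rot_kite (pivot K) (of_int a * \<alpha> + of_int b * \<beta>) K"
    using unfold_step_rotation by metis
  have pivot_rep: "trig_rep d (\<lambda>_ _. 0) (\<lambda>\<alpha> \<beta>. pivot (last_kite \<alpha> \<beta> ws))"
    using assms pivot(1) unfolding kite_rep_def by blast
  have "trig_rep (d + 2) e (\<lambda>\<alpha> \<beta>. v (last_kite \<alpha> \<beta> (ws @ [w])))"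
    if "v \<in> {alpha_vertex, beta_vertex, side_vertex1, side_vertex2}"
      and "trig_rep d e (\<lambda>\<alpha> \<beta>. v (last_kite \<alpha> \<beta> ws))" for v e
    using trig_rep_rot[OF pivot_rep that(2) pivot(2)] vertex_rot_kite[OF that(1)]
    by (simp add: last_kite_def pivot(3))
  then show ?thesis
    using assms unfolding kite_rep_def by blast
qed

lemma kite_rep_last_kite: "kite_rep (2 * length ws) ws"
proof (induction ws rule: rev_induct)
  case Nil
  show ?case using kite_rep_Nil by simp
next
  case (snoc w ws)
  then show ?case using kite_rep_snoc[of "2 * length ws" ws w] by simp
qed

theorem lemma3p1:
  fixes ws :: "step list" and n :: nat
  assumes "n = length ws + 1"
  shows "trig_poly_on (2 * n - 2) (\<lambda>\<alpha> \<beta>. Re (alpha_vertex (last_kite \<alpha> \<beta> ws)))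
       \<and> trig_poly_on (2 * n - 2) (\<lambda>\<alpha> \<beta>. Im (alpha_vertex (last_kite \<alpha> \<beta> ws)))
       \<and> trig_poly_on (2 * n - 2) (\<lambda>\<alpha> \<beta>. Re (beta_vertex (last_kite \<alpha> \<beta> ws)))
       \<and> trig_poly_on (2 * n - 2) (\<lambda>\<alpha> \<beta>. Im (beta_vertex (last_kite \<alpha> \<beta> ws)))
       \<and> (\<forall>sv \<in> {side_vertex1, side_vertex2}.
           \<exists>P Q :: real \<Rightarrow> real \<Rightarrow> real. \<exists>m l :: int.
             trig_poly_on (2 * n - 2) P \<and> trig_poly_on (2 * n - 2) Q \<and>
             \<bar>m\<bar> + \<bar>l\<bar> \<le> int (2 * n - 1) \<and>
             (\<forall>\<alpha> \<beta>. admissible \<alpha> \<beta> \<longrightarrow>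
                Re (sv (last_kite \<alpha> \<beta> ws)) =
                  P \<alpha> \<beta> + sin \<beta> / sin (\<alpha> + \<beta>) * cos (of_int m * \<alpha> + of_int l * \<beta>) \<and>
                Im (sv (last_kite \<alpha> \<beta> ws)) =
                  Q \<alpha> \<beta> + sin \<beta> / sin (\<alpha> + \<beta>) * sin (of_int m * \<alpha> + of_int l * \<beta>)))"
proof -
  have degrees: "2 * n - 2 = 2 * length ws" "int (2 * n - 1) = int (2 * length ws) + 1"
    using assms by auto
  from kite_rep_last_kite[of ws] show ?thesis
    unfolding kite_rep_def degrees
    using trig_rep_zero_Re_Im trig_rep_Re_Im[where r = "\<lambda>\<alpha> \<beta>. sin \<beta> / sin (\<alpha> + \<beta>)"]
    by blast
qed

end
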